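(* Let $d>0$, let $\ell$ be a certified lower bound with certificate matrix $\Lambda=[\lambda_1|\cdots|\lambda_m]$, and suppose $f(d,\ell)=1$. Suppose $j\in\{1,\dots,m\}$ satisfies $0<a_j^\top y(d,\ell)-u_j\le\gamma_j(d,\ell)$, and that in addition $-\lambda_j^\top u\ge L_j:=a_j^\top y(d,\ell)-\gamma_j(d,\ell)$. Define $\ell^{(1)}:=\ell-\frac{2(t_j(d,\ell)-v_j(\ell))}{d_j\gamma_j(d,\ell)^2}e_j$ and suppose $f(d,\ell^{(1)})>0$. Define $d^{(1)}:=d/f(d,\ell^{(1)})$, $$\ell^{(2)}:=\ell^{(1)}+\frac{2\big(2v_j(\ell^{(1)})-\gamma_j(d^{(1)},\ell^{(1)})\big)}{(m-1)d^{(1)}_j\gamma_j(d^{(1)},\ell^{(1)})^2+2}e_j,\qquad d^{(2)}:=d^{(1)}+\frac{2}{m-1}\frac{1}{\gamma_j(d^{(1)},\ell^{(1)})^2}e_j,$$ and $d^{(3)}:=d^{(2)}/f(d^{(2)},\ell^{(2)})$. Then: (a) $\ell^{(2)}_j\le\max\{\ell_j,L_j\}$, and hence $\ell^{(2)}$ is a certified lower bound with certificate matrix $\Lambda$; (b) $\gamma_j(d^{(1)},\ell^{(1)})>0$ (so $\ell^{(2)}$ and $d^{(2)}$ are well defined); (c) $f(d^{(2)},\ell^{(2)})=\frac{m^2}{m^2-1}$, i.e. $d^{(3)}=\frac{m^2-1}{m^2}\Big(d^{(1)}+\frac{2}{m-1}\frac{1}{\gamma_j(d^{(1)},\ell^{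(1)})^2}e_j\Big)$.
   Context: Standing assumption: $A=[a_1|\cdots|a_m]\in\mathbb{R}^{n\times m}$ has columns of unit Euclidean norm and $\{A\lambda:\lambda\ge0\}=\mathbb{R}^n$ (so $m>n\ge1$); $u\in\mathbb{R}^m$. $D=\mathrm{diag}(d)$; $r(\ell)=\tfrac12(u+\ell)$, $v(\ell)=\tfrac12(u-\ell)$, $B(d)=ADA^\top$, $y(d,\ell)=B(d)^{-1}ADr(\ell)$, $t(d,\ell)=A^\top y(d,\ell)-r(\ell)$, $f(d,\ell)=v(\ell)^\top Dv(\ell)-t(d,\ell)^\top Dt(d,\ell)$, $\gamma_i(d,\ell)=\sqrt{f(d,\ell)a_i^\top B(d)^{-1}a_i}$ when $f(d,\ell)>0$. $\ell$ is a certified lower bound with certificate matrix $\Lambda\in\mathbb{R}^{m\times m}$ if $A\Lambda=-A$, $\Lambda\ge0$, $-\Lambda^\top u\ge\ell$. *)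

theory Defs
  imports "HOL-Analysis.Analysis"
begin

text \<open>Setting: A has n rows (index type 'n) and m columns (index type 'm);
  a_i = column i A.  Vectors in R^m are real^'m, matrices real^'m^'n.\<close>

definition diagm :: "real^'m \<Rightarrow> real^'m^'m" where
  "diagm d = (\<chi> i k. if i = k then d $ i else 0)"

definition standing_assm :: "real^'m^'n \<Rightarrow> bool" where
  "standing_assm A \<longleftrightarrow> (\<forall>i. norm (column i A) = 1) \<and>
     {A *v lam | lam. \<forall>i. lam $ i \<ge> 0} = UNIV"

definition rr :: "real^'m \<Rightarrow> real^'m \<Rightarrow> real^'m" where
  "rr u l = (1/2) *\<^sub>R (u + l)"

definition vv :: "real^'m \<Rightarrow> real^'m \<Rightarrow> real^'m" where
  "vv u l = (1/2) *\<^sub>R (u - l)"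

definition BB :: "real^'m^'n \<Rightarrow> real^'m \<Rightarrow> real^'n^'n" where
  "BB A d = A ** diagm d ** transpose A"

definition yy :: "real^'m^'n \<Rightarrow> real^'m \<Rightarrow> real^'m \<Rightarrow> real^'m \<Rightarrow> real^'n" where
  "yy A u d l = matrix_inv (BB A d) *v (A *v (diagm d *v rr u l))"

definition tt :: "real^'m^'n \<Rightarrow> real^'m \<Rightarrow> real^'m \<Rightarrow> real^'m \<Rightarrow> real^'m" where
  "tt A u d l = transpose A *v yy A u d l - rr u l"

definition ff :: "real^'m^'n \<Rightarrow> real^'m \<Rightarrow> real^'m \<Rightarrow> real^'m \<Rightarrow> real" where
  "ff A u d l = vv u l \<bullet> (diagm d *v vv u l) - tt A u d l \<bullet> (diagm d *v tt A u d l)"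

text \<open>gamma_i(d,l) = sqrt (f(d,l) a_i^T B(d)^{-1} a_i); the paper only uses it when f(d,l) > 0.\<close>
definition gam :: "real^'m^'n \<Rightarrow> real^'m \<Rightarrow> real^'m \<Rightarrow> real^'m \<Rightarrow> 'm \<Rightarrow> real" where
  "gam A u d l i = sqrt (ff A u d l * (column i A \<bullet> (matrix_inv (BB A d) *v column i A)))"

definition certified_lb :: "real^'m^'n \<Rightarrow> real^'m \<Rightarrow> real^'m \<Rightarrow> real^'m^'m \<Rightarrow> bool" where
  "certified_lb A u l Lam \<longleftrightarrow> A ** Lam = - A \<and> (\<forall>i k. Lam $ i $ k \<ge> 0) \<and>
     (\<forall>i. - ((transpose Lam *v u) $ i) \<ge> l $ i)"

end

theory Submission
  imports Defs
begin

text \<open>Both updates change only the \<open>j\<close>-th weight and the \<open>j\<close>-th lower bound, so \<open>B(d)\<close> changes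
  by a rank-one matrix and \<open>y(d,\<ell>)\<close> moves along \<open>z = B(d)\<^sup>-\<^sup>1 a\<^sub>j\<close>. Writing
  \<open>f(d,\<ell>) = \<Sum>\<^sub>i d\<^sub>i (u\<^sub>i - a\<^sub>i\<^sup>Ty)(a\<^sub>i\<^sup>Ty - \<ell>\<^sub>i)\<close> at \<open>y = y(d,\<ell>)\<close>, the normal equations make
  the cross term vanish, so \<open>f\<close> drops by the \<open>B(d)\<close>-norm of the displacement of \<open>y\<close> and changes
  otherwise only in its \<open>j\<close>-th summand. The first update moves \<open>a\<^sub>j\<^sup>Ty\<close> exactly onto \<open>u\<^sub>j\<close> and
  lowers \<open>f\<close> to \<open>1 - s\<^sup>2/h\<close>, where \<open>s = a\<^sub>j\<^sup>Ty - u\<^sub>j\<close> and \<open>h = a\<^sub>j\<^sup>TB(d)\<^sup>-\<^sup>1a\<^sub>j\<close>; rescaling \<open>d\<close>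
  restores \<open>f = 1\<close> and leaves \<open>\<gamma>\<^sub>j\<close> invariant, so \<open>\<gamma>\<^sub>j(d\<^sup>(\<^sup>1\<^sup>),\<ell>\<^sup>(\<^sup>1\<^sup>))\<^sup>2 = h - s\<^sup>2 > 0\<close>. The second
  update is then an explicit rational computation, and \<open>\<ell>\<^sup>(\<^sup>2\<^sup>)\<^sub>j\<close> is a convex combination of
  \<open>\<ell>\<^sup>(\<^sup>1\<^sup>)\<^sub>j \<le> \<ell>\<^sub>j\<close> and \<open>u\<^sub>j - \<gamma>\<^sub>j \<le> L\<^sub>j\<close>.\<close>

declare transpose_matrix_vector [simp del]

lemma inner_column_eq_sum: "column i A \<bullet> y = (\<Sum>k\<in>UNIV. A$k$i * y$k)"
  by (simp add: inner_vec_def column_def mult.commute)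

lemma diagm_mult_vec: "diagm d *v w = (\<chi> i. d$i * w$i)"
proof -
  have "(\<Sum>k\<in>UNIV. (if i = k then d$i else 0) * w$k) = (\<Sum>k\<in>UNIV. if i = k then d$i * w$k else 0)" for i
    by (rule sum.cong) auto
  then show ?thesis by (simp add: diagm_def matrix_vector_mult_def vec_eq_iff)
qed

lemma transpose_mult_vec: "transpose A *v x = (\<chi> i. column i A \<bullet> x)"
  by (simp add: vec_eq_iff inner_column_eq_sum transpose_def matrix_vector_mult_def mult.commute)

lemma BB_mult_vec: "BB A d *v x = A *v (\<chi> i. d$i * (column i A \<bullet> x))"
  unfolding BB_def
  by (simp only: matrix_vector_mul_assoc[symmetric] transpose_mult_vec diagm_mult_vec) simp

lemma inner_matrix_vector_mult: "y \<bullet> (A *v w) = (\<Sum>i\<in>UNIV. (column i A \<bullet> y) * w$i)"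
proof -
  have "y \<bullet> (A *v w) = (\<Sum>k\<in>UNIV. \<Sum>i\<in>UNIV. y$k * (A$k$i * w$i))"
    by (simp add: inner_vec_def matrix_vector_mult_def sum_distrib_left)
  also have "\<dots> = (\<Sum>i\<in>UNIV. \<Sum>k\<in>UNIV. y$k * (A$k$i * w$i))"
    by (rule sum.swap)
  also have "\<dots> = (\<Sum>i\<in>UNIV. (column i A \<bullet> y) * w$i)"
    by (simp add: inner_column_eq_sum sum_distrib_left sum_distrib_right mult_ac)
  finally show ?thesis .
qed

lemma inner_BB_mult_vec: "x \<bullet> (BB A d *v x) = (\<Sum>i\<in>UNIV. d$i * (column i A \<bullet> x)^2)"
  by (simp add: BB_mult_vec inner_matrix_vector_mult power2_eq_square mult_ac)

lemma weighted_squares_eq_0_iff: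
  fixes d :: "real^'m"
  assumes "\<forall>i. d $ i > 0"
  shows "(\<Sum>i\<in>UNIV. d$i * (column i A \<bullet> x)^2) = 0 \<longleftrightarrow> (\<forall>i. column i A \<bullet> x = 0)"
proof -
  have "\<forall>i\<in>UNIV. d$i * (column i A \<bullet> x)^2 \<ge> 0" using assms by (simp add: less_imp_le)
  then show ?thesis using assms by (simp add: sum_nonneg_eq_0_iff) (metis less_irrefl)
qed

lemma matrix_inv_mult:
  assumes "invertible M"
  shows "M ** matrix_inv M = mat 1" "matrix_inv M ** M = mat 1"
  using someI_ex[OF assms[unfolded invertible_def]] unfolding matrix_inv_def by auto

lemma matrix_inv_mult_vec_eqI:
  fixes M :: "real^'n^'n"
  assumes "invertible M" "M *v x = b"
  shows "matrix_inv M *v b = x"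
  by (metis assms matrix_inv_mult(2) matrix_vector_mul_assoc matrix_vector_mul_lid)

lemma mult_vec_matrix_inv_mult_vec:
  fixes M :: "real^'n^'n"
  assumes "invertible M"
  shows "M *v (matrix_inv M *v b) = b"
  by (metis assms matrix_inv_mult(1) matrix_vector_mul_assoc matrix_vector_mul_lid)

lemma standing_assm_column_neq_0:
  "standing_assm A \<Longrightarrow> column i A \<noteq> 0"
  unfolding standing_assm_def by (metis norm_zero zero_neq_one)

lemma BB_invertible:
  fixes A :: "real^'m^'n"
  assumes std: "standing_assm A" and dpos: "\<forall>i. d $ i > 0"
  shows "invertible (BB A d)"
proof -
  have "x = 0" if "BB A d *v x = 0" for x
  proof -
    have "(\<Sum>i\<in>UNIV. d$i * (column i A \<bullet> x)^2) = 0"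
      using that inner_BB_mult_vec[of x A d] by simp
    then have orth: "\<forall>i. column i A \<bullet> x = 0"
      using weighted_squares_eq_0_iff[OF dpos] by blast
    obtain lam where "x = A *v lam"
      using std unfolding standing_assm_def by blast
    then have "x \<bullet> x = x \<bullet> (A *v lam)" by simp
    also have "\<dots> = 0" by (simp add: inner_matrix_vector_mult orth)
    finally have "x \<bullet> x = 0" .
    then show "x = 0" by simp
  qed
  then show ?thesis
    using invertible_left_inverse matrix_left_invertible_ker by blast
qed

lemma inner_column_BB_inverse_pos:
  fixes A :: "real^'m^'n"
  assumes std: "standing_assm A" and dpos: "\<forall>i. d $ i > 0"
  shows "column j A \<bullet> (matrix_inv (BB A d) *v column j A) > 0"
proof -
  define z where "z = matrix_inv (BB A d) *v column j A"
  have Bz: "BB A d *v z = column j A"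
    unfolding z_def by (rule mult_vec_matrix_inv_mult_vec[OF BB_invertible[OF std dpos]])
  have h: "column j A \<bullet> z = (\<Sum>i\<in>UNIV. d$i * (column i A \<bullet> z)^2)"
    using inner_BB_mult_vec[of z A d] by (simp add: Bz inner_commute)
  have "column j A \<bullet> z \<noteq> 0"
  proof
    assume "column j A \<bullet> z = 0"
    then have "(\<Sum>i\<in>UNIV. d$i * (column i A \<bullet> z)^2) = 0" using h by simp
    then have "\<forall>i. column i A \<bullet> z = 0" using weighted_squares_eq_0_iff[OF dpos] by blast
    then have "(\<chi> i. d$i * (column i A \<bullet> z)) = 0" by (simp add: vec_eq_iff)
    then have "BB A d *v z = 0" by (simp add: BB_mult_vec)
    then show False using Bz standing_assm_column_neq_0[OF std] by simp
  qed
  moreover have "column j A \<bullet> z \<ge> 0"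
    unfolding h by (intro sum_nonneg mult_nonneg_nonneg) (simp_all add: dpos less_imp_le)
  ultimately show ?thesis by (simp flip: z_def)
qed

definition ff_at :: "real^'m^'n \<Rightarrow> real^'m \<Rightarrow> real^'m \<Rightarrow> real^'m \<Rightarrow> real^'n \<Rightarrow> real" where
  "ff_at A u d l y = (\<Sum>i\<in>UNIV. d$i * (u$i - column i A \<bullet> y) * (column i A \<bullet> y - l$i))"

definition normal_eq :: "real^'m^'n \<Rightarrow> real^'m \<Rightarrow> real^'m \<Rightarrow> real^'m \<Rightarrow> real^'n \<Rightarrow> bool" where
  "normal_eq A u d l y \<longleftrightarrow> BB A d *v y = A *v (diagm d *v rr u l)"

lemma tt_nth: "tt A u d l $ i = column i A \<bullet> yy A u d l - rr u l $ i"
  by (simp add: tt_def transpose_mult_vec)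

lemma ff_eq_ff_at_yy: "ff A u d l = ff_at A u d l (yy A u d l)"
proof -
  have "ff A u d l = (\<Sum>i\<in>UNIV. vv u l $ i * (d$i * vv u l $ i) - tt A u d l $ i * (d$i * tt A u d l $ i))"
    unfolding ff_def by (simp add: inner_vec_def diagm_mult_vec sum_subtractf)
  also have "\<dots> = ff_at A u d l (yy A u d l)"
    unfolding ff_at_def tt_nth
    by (rule sum.cong) (simp_all add: vv_def rr_def algebra_simps power2_eq_square divide_simps)
  finally show ?thesis .
qed

lemma normal_eq_yy: "standing_assm A \<Longrightarrow> \<forall>i. d $ i > 0 \<Longrightarrow> normal_eq A u d l (yy A u d l)"
  unfolding normal_eq_def yy_def by (rule mult_vec_matrix_inv_mult_vec[OF BB_invertible])

lemma yy_eqI: "standing_assm A \<Longrightarrow> \<forall>i. d $ i > 0 \<Longrightarrow> normal_eq A u d l y \<Longrightarrow> yy A u d l = y"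
  unfolding normal_eq_def yy_def by (rule matrix_inv_mult_vec_eqI[OF BB_invertible])

lemma ff_at_add_of_normal_eq:
  assumes "normal_eq A u d l y"
  shows "ff_at A u d l (y + w) = ff_at A u d l y - (\<Sum>i\<in>UNIV. d$i * (column i A \<bullet> w)^2)"
proof -
  \<comment> \<open>the cross term is \<open>w\<^sup>T(B(d)y - A D r(\<ell>))\<close>, which the normal equations annihilate\<close>
  have "w \<bullet> (BB A d *v y) = w \<bullet> (A *v (diagm d *v rr u l))"
    using assms unfolding normal_eq_def by simp
  then have "(\<Sum>i\<in>UNIV. (column i A \<bullet> w) * (d$i * (column i A \<bullet> y)) - (column i A \<bullet> w) * (d$i * rr u l $ i)) = 0"
    by (simp add: BB_mult_vec inner_matrix_vector_mult diagm_mult_vec sum_subtractf)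
  then have cross: "(\<Sum>i\<in>UNIV. d$i * (column i A \<bullet> w) * (column i A \<bullet> y - rr u l $ i)) = 0"
    by (simp add: algebra_simps)
  have "ff_at A u d l (y + w) = (\<Sum>i\<in>UNIV. d$i * (u$i - column i A \<bullet> y) * (column i A \<bullet> y - l$i)
      - d$i * (column i A \<bullet> w)^2 - 2 * (d$i * (column i A \<bullet> w) * (column i A \<bullet> y - rr u l $ i)))"
    unfolding ff_at_def
    by (rule sum.cong) (simp_all add: inner_add_right rr_def algebra_simps power2_eq_square)
  then show ?thesis
    using cross unfolding ff_at_def by (simp add: sum_subtractf sum_distrib_left[symmetric])
qed

lemma BB_add_axis_mult_vec:
  "BB A (d + e *\<^sub>R axis j 1) *v x = BB A d *v x + (e * (column j A \<bullet> x)) *\<^sub>R column j A"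
proof -
  have "(\<chi> i. (d + e *\<^sub>R axis j 1)$i * (column i A \<bullet> x))
      = (\<chi> i. d$i * (column i A \<bullet> x)) + (e * (column j A \<bullet> x)) *\<^sub>R axis j 1"
    by (simp add: vec_eq_iff axis_def algebra_simps)
  then show ?thesis
    by (simp add: BB_mult_vec matrix_vector_right_distrib matrix_vector_mult_scaleR
        matrix_vector_mult_basis)
qed

lemma ff_at_add_axis:
  "ff_at A u (d + e *\<^sub>R axis j 1) (l + \<delta> *\<^sub>R axis j 1) y = ff_at A u d l y
    + (d$j + e) * (u$j - column j A \<bullet> y) * (column j A \<bullet> y - l$j - \<delta>)
    - d$j * (u$j - column j A \<bullet> y) * (column j A \<bullet> y - l$j)"
proof -
  have "ff_at A u (d + e *\<^sub>R axis j 1) (l + \<delta> *\<^sub>R axis j 1) y - ff_at A u d l y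
    = (\<Sum>i\<in>UNIV. if i = j then (d$j + e) * (u$j - column j A \<bullet> y) * (column j A \<bullet> y - l$j - \<delta>)
        - d$j * (u$j - column j A \<bullet> y) * (column j A \<bullet> y - l$j) else 0)"
    unfolding ff_at_def sum_subtractf[symmetric]
    by (rule sum.cong) (auto simp: axis_def)
  then show ?thesis by simp
qed

text \<open>Changing \<open>d\<^sub>j\<close> by \<open>e \<ge> 0\<close> and \<open>\<ell>\<^sub>j\<close> by \<open>\<delta>\<close> moves \<open>y\<close> along \<open>z = B(d)\<^sup>-\<^sup>1a\<^sub>j\<close>
  (Sherman--Morrison); the hypothesis on \<open>\<mu>\<close> is the \<open>j\<close>-th normal equation.\<close>

lemma yy_ff_add_axis:
  fixes A :: "real^'m^'n" and u d l :: "real^'m" and j :: 'm and e \<delta> \<mu> :: real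
  defines "z \<equiv> matrix_inv (BB A d) *v column j A"
    and "h \<equiv> column j A \<bullet> (matrix_inv (BB A d) *v column j A)"
    and "p \<equiv> column j A \<bullet> yy A u d l"
  assumes std: "standing_assm A" and dpos: "\<forall>i. d $ i > 0" and e: "e \<ge> 0"
    and coeff: "\<mu> + e * (p + \<mu> * h) = e * rr u l $ j + \<delta>/2 * (d$j + e)"
  shows "yy A u (d + e *\<^sub>R axis j 1) (l + \<delta> *\<^sub>R axis j 1) = yy A u d l + \<mu> *\<^sub>R z"
    and "ff A u (d + e *\<^sub>R axis j 1) (l + \<delta> *\<^sub>R axis j 1) = ff A u d l - \<mu>^2 * h
      + (d$j + e) * (u$j - (p + \<mu> * h)) * ((p + \<mu> * h) - l$j - \<delta>)
      - d$j * (u$j - (p + \<mu> * h)) * ((p + \<mu> * h) - l$j)"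
proof -
  let ?y = "yy A u d l" and ?d' = "d + e *\<^sub>R axis j 1" and ?l' = "l + \<delta> *\<^sub>R axis j 1"
  let ?y' = "?y + \<mu> *\<^sub>R z"
  have Bz: "BB A d *v z = column j A"
    unfolding z_def by (rule mult_vec_matrix_inv_mult_vec[OF BB_invertible[OF std dpos]])
  have d'pos: "\<forall>i. ?d' $ i > 0" using dpos e by (auto simp: axis_def intro: add_pos_nonneg)
  have ny: "normal_eq A u d l ?y" by (rule normal_eq_yy[OF std dpos])
  have ay': "column j A \<bullet> ?y' = p + \<mu> * h"
    by (simp add: inner_add_right p_def h_def z_def)
  have rhs: "diagm ?d' *v rr u ?l' = diagm d *v rr u l + (e * rr u l $ j + \<delta>/2 * (d$j + e)) *\<^sub>R axis j 1"
    by (simp add: diagm_mult_vec rr_def vec_eq_iff axis_def algebra_simps)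
  have "BB A d *v ?y' = BB A d *v ?y + \<mu> *\<^sub>R column j A"
    by (simp add: matrix_vector_right_distrib matrix_vector_mult_scaleR Bz)
  then have "BB A ?d' *v ?y' = BB A d *v ?y + (\<mu> + e * (p + \<mu> * h)) *\<^sub>R column j A"
    by (simp only: BB_add_axis_mult_vec ay' scaleR_add_left add.assoc)
  also have "\<dots> = A *v (diagm ?d' *v rr u ?l')"
    using ny unfolding normal_eq_def coeff rhs
    by (simp add: matrix_vector_right_distrib matrix_vector_mult_scaleR matrix_vector_mult_basis)
  finally have "normal_eq A u ?d' ?l' ?y'" unfolding normal_eq_def .
  then show yy': "yy A u ?d' ?l' = ?y'" by (rule yy_eqI[OF std d'pos])
  have "(\<Sum>i\<in>UNIV. d$i * (column i A \<bullet> (\<mu> *\<^sub>R z))^2) = \<mu>^2 * (z \<bullet> (BB A d *v z))"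
    by (simp add: inner_BB_mult_vec sum_distrib_left power_mult_distrib mult_ac)
  also have "\<dots> = \<mu>^2 * h" by (simp add: Bz h_def inner_commute flip: z_def)
  finally have "ff_at A u d l ?y' = ff A u d l - \<mu>^2 * h"
    by (simp add: ff_at_add_of_normal_eq[OF ny] ff_eq_ff_at_yy)
  then show "ff A u ?d' ?l' = ff A u d l - \<mu>^2 * h
      + (d$j + e) * (u$j - (p + \<mu> * h)) * ((p + \<mu> * h) - l$j - \<delta>)
      - d$j * (u$j - (p + \<mu> * h)) * ((p + \<mu> * h) - l$j)"
    by (simp add: ff_eq_ff_at_yy yy' ff_at_add_axis ay')
qed

lemma BB_scaleR_mult_vec: "BB A (c *\<^sub>R d) *v x = c *\<^sub>R (BB A d *v x)"
proof -
  have "(\<chi> i. (c *\<^sub>R d)$i * (column i A \<bullet> x)) = c *\<^sub>R (\<chi> i. d$i * (column i A \<bullet> x))"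
    by (simp add: vec_eq_iff)
  then show ?thesis by (simp add: BB_mult_vec matrix_vector_mult_scaleR)
qed

lemma yy_scaleR:
  assumes std: "standing_assm A" and dpos: "\<forall>i. d $ i > 0" and c: "c > 0"
  shows "yy A u (c *\<^sub>R d) l = yy A u d l"
proof (rule yy_eqI[OF std])
  show "\<forall>i. (c *\<^sub>R d) $ i > 0" using dpos c by simp
  have "diagm (c *\<^sub>R d) *v rr u l = c *\<^sub>R (diagm d *v rr u l)"
    by (simp add: diagm_mult_vec vec_eq_iff)
  then show "normal_eq A u (c *\<^sub>R d) l (yy A u d l)"
    using normal_eq_yy[OF std dpos] unfolding normal_eq_def
    by (simp add: BB_scaleR_mult_vec matrix_vector_mult_scaleR)
qed

lemma ff_scaleR:
  assumes "standing_assm A" and "\<forall>i. d $ i > 0" and "c > 0"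
  shows "ff A u (c *\<^sub>R d) l = c * ff A u d l"
  by (simp add: ff_eq_ff_at_yy yy_scaleR[OF assms] ff_at_def sum_distrib_left mult_ac)

text \<open>\<open>\<gamma>\<^sub>j\<close> is invariant under rescaling \<open>d\<close>: \<open>f\<close> scales by \<open>c\<close> and \<open>a\<^sub>j\<^sup>TB(d)\<^sup>-\<^sup>1a\<^sub>j\<close> by \<open>1/c\<close>.\<close>

lemma gam_scaleR:
  assumes std: "standing_assm A" and dpos: "\<forall>i. d $ i > 0" and c: "c > 0"
  shows "gam A u (c *\<^sub>R d) l j = gam A u d l j"
proof -
  let ?z = "matrix_inv (BB A d) *v column j A"
  have cd: "\<forall>i. (c *\<^sub>R d) $ i > 0" using dpos c by simp
  have "BB A (c *\<^sub>R d) *v ((1/c) *\<^sub>R ?z) = column j A"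
    using c by (simp add: BB_scaleR_mult_vec matrix_vector_mult_scaleR
        mult_vec_matrix_inv_mult_vec[OF BB_invertible[OF std dpos]])
  then have "matrix_inv (BB A (c *\<^sub>R d)) *v column j A = (1/c) *\<^sub>R ?z"
    by (rule matrix_inv_mult_vec_eqI[OF BB_invertible[OF std cd]])
  then show ?thesis
    using c by (simp add: gam_def ff_scaleR[OF std dpos c])
qed

lemma gam_square:
  fixes A :: "real^'m^'n"
  assumes "standing_assm A" and "\<forall>i. d $ i > 0" and "ff A u d l \<ge> 0"
  shows "(gam A u d l j)^2 = ff A u d l * (column j A \<bullet> (matrix_inv (BB A d) *v column j A))"
  using assms inner_column_BB_inverse_pos[OF assms(1,2), of j] by (simp add: gam_def)

lemma tt_minus_vv_nth: "tt A u d l $ j - vv u l $ j = column j A \<bullet> yy A u d l - u $ j"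
  by (simp add: tt_nth rr_def vv_def field_simps)

lemma first_update:
  fixes A :: "real^'m^'n" and u d l :: "real^'m" and j :: 'm
  defines "h \<equiv> column j A \<bullet> (matrix_inv (BB A d) *v column j A)"
    and "s \<equiv> column j A \<bullet> yy A u d l - u $ j"
  assumes std: "standing_assm A" and dpos: "\<forall>i. d $ i > 0"
  shows "column j A \<bullet> yy A u d (l - (2 * s / (d$j * h)) *\<^sub>R axis j 1) = u $ j"
    and "ff A u d (l - (2 * s / (d$j * h)) *\<^sub>R axis j 1) = ff A u d l - s^2 / h"
proof -
  have hpos: "h > 0" unfolding h_def by (rule inner_column_BB_inverse_pos[OF std dpos])
  have "d $ j > 0" using dpos by simp
  then have coeff: "- s / h + 0 * (column j A \<bullet> yy A u d l + - s / h * h)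
      = 0 * rr u l $ j + - (2 * s / (d$j * h)) / 2 * (d$j + 0)"
    using hpos by (simp add: field_simps)
  have "d + 0 *\<^sub>R axis j 1 = d" and "l + - x *\<^sub>R axis j 1 = l - x *\<^sub>R axis j 1" for x
    by simp_all
  note update = yy_ff_add_axis[OF std dpos order_refl coeff[unfolded h_def], unfolded this, folded h_def]
  have on_face: "column j A \<bullet> yy A u d l + - s / h * h = u $ j"
    using hpos by (simp add: s_def)
  show "column j A \<bullet> yy A u d (l - (2 * s / (d$j * h)) *\<^sub>R axis j 1) = u $ j"
    unfolding update(1) inner_add_right inner_scaleR_right h_def[symmetric] by (rule on_face)
  show "ff A u d (l - (2 * s / (d$j * h)) *\<^sub>R axis j 1) = ff A u d l - s^2 / h"
    unfolding update(2) on_face using hpos by (simp add: power2_eq_square)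
qed

lemma first_update_rescaled:
  fixes A :: "real^'m^'n" and u d l l1 d1 :: "real^'m" and j :: 'm
  defines "h \<equiv> column j A \<bullet> (matrix_inv (BB A d) *v column j A)"
    and "s \<equiv> column j A \<bullet> yy A u d l - u $ j"
  assumes std: "standing_assm A" and dpos: "\<forall>i. d $ i > 0" and f1: "ff A u d l = 1"
    and l1: "l1 = l - (2 * (tt A u d l $ j - vv u l $ j) / (d $ j * (gam A u d l j)\<^sup>2)) *\<^sub>R axis j 1"
    and f_l1: "ff A u d l1 > 0"
    and d1: "d1 = (1 / ff A u d l1) *\<^sub>R d"
  shows "ff A u d1 l1 = 1" and "column j A \<bullet> yy A u d1 l1 = u $ j"
    and "gam A u d1 l1 j = sqrt (h - s^2)" and "s^2 < h"
proof -
  have hpos: "h > 0" unfolding h_def by (rule inner_column_BB_inverse_pos[OF std dpos])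
  have "l1 = l - (2 * s / (d$j * h)) *\<^sub>R axis j 1"
    using gam_square[OF std dpos, of u l j] by (simp add: l1 f1 tt_minus_vv_nth h_def s_def)
  note update = first_update[OF std dpos, where j=j and u=u and l=l, folded h_def s_def, folded this]
  have c: "1 / ff A u d l1 > 0" using f_l1 by simp
  show "ff A u d1 l1 = 1"
    using f_l1 by (simp add: d1 ff_scaleR[OF std dpos c])
  show "column j A \<bullet> yy A u d1 l1 = u $ j"
    by (simp add: d1 yy_scaleR[OF std dpos c] update(1))
  have "gam A u d1 l1 j = gam A u d l1 j"
    unfolding d1 by (rule gam_scaleR[OF std dpos c])
  also have "\<dots> = sqrt (ff A u d l1 * h)"
    by (simp add: gam_def h_def)
  also have "ff A u d l1 * h = h - s^2"
    using hpos by (simp add: update(2) f1 field_simps)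
  finally show "gam A u d1 l1 j = sqrt (h - s^2)" .
  show "s^2 < h"
    using f_l1 hpos by (simp add: update(2) f1 field_simps)
qed

lemma inverse_square_identity:
  fixes k c :: real
  assumes k: "k > 0" and c: "c = k + 2"
  shows "1 - (1/c)^2 + 2 * (1/c) * (1 - 1/c) / k = (k + 1)^2 / ((k + 1)^2 - 1)"
proof -
  have e: "(k + 1)^2 - 1 = k * c" unfolding c by (simp add: algebra_simps power2_eq_square)
  have "c > 0" using k c by simp
  then have "1 - (1/c)^2 + 2 * (1/c) * (1 - 1/c) / k = (k * c^2 - k + 2 * (c - 1)) / (k * c^2)"
    using k by (simp add: field_simps power2_eq_square)
  also have "k * c^2 - k + 2 * (c - 1) = (k + 1)^2 * c"
    unfolding c by (simp add: algebra_simps power2_eq_square)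
  finally show ?thesis unfolding e using \<open>c > 0\<close> by (simp add: power2_eq_square)
qed

text \<open>The second update in coordinates: \<open>D = d\<^sub>j\<close>, \<open>g = \<gamma>\<^sub>j\<close>, \<open>U = u\<^sub>j = a\<^sub>j\<^sup>Ty\<close>, \<open>L = \<ell>\<^sub>j\<close>,
  with \<open>f = 1\<close> and hence \<open>a\<^sub>j\<^sup>TB(d)\<^sup>-\<^sup>1a\<^sub>j = g\<^sup>2\<close>; the value \<open>\<mu> = -1/((M+1)g)\<close> is forced by the
  \<open>j\<close>-th normal equation.\<close>

lemma second_update_value:
  fixes M g D U L :: real
  assumes M: "M > 1" and g: "g > 0" and D: "D > 0"
  defines "e \<equiv> 2 / (M - 1) * (1 / g^2)"
    and "\<delta> \<equiv> 2 * (2 * ((U - L)/2) - g) / ((M - 1) * D * g^2 + 2)"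
  assumes \<mu>: "\<mu> + e * (U + \<mu> * g^2) = e * ((U + L)/2) + \<delta>/2 * (D + e)"
  shows "1 - \<mu>^2 * g^2 + (D + e) * (U - (U + \<mu> * g^2)) * ((U + \<mu> * g^2) - L - \<delta>)
      - D * (U - (U + \<mu> * g^2)) * ((U + \<mu> * g^2) - L) = M^2 / (M^2 - 1)"
proof -
  obtain k where k: "k > 0" and Mk: "M = k + 1" using M by (intro that[of "M - 1"]) auto
  define c where "c = k + 2"
  have c: "c > 0" using k by (simp add: c_def)
  have e: "e = 2 / (k * g^2)" unfolding e_def Mk by simp
  have "D + e = (k * D * g^2 + 2) / (k * g^2)"
    unfolding e using k g by (simp add: field_simps)
  moreover have "k * D * g^2 + 2 > 0" using k D g by (simp add: add_pos_pos)
  ultimately have \<delta>De: "\<delta> * (D + e) = 2 * (U - L - g) / (k * g^2)"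
    unfolding \<delta>_def Mk by simp
  have "\<delta>/2 * (D + e) = (\<delta> * (D + e)) / 2" by simp
  also have "\<dots> = (U - L - g) / (k * g^2)"
    unfolding \<delta>De using k g by (simp add: field_simps)
  finally have half: "\<delta>/2 * (D + e) = (U - L - g) / (k * g^2)" .
  have "\<mu> * (1 + e * g^2) = e * ((U + L)/2) - e * U + \<delta>/2 * (D + e)"
    using \<mu> by (simp add: field_simps)
  also have "\<dots> = - 1 / (k * g)"
    unfolding half unfolding e using k g by (simp add: field_simps power2_eq_square)
  finally have "\<mu> * (c / k) = - 1 / (k * g)"
    unfolding e c_def using k g by (simp add: field_simps)
  then have \<mu>: "\<mu> = - 1 / (c * g)"
    using k g c by (simp add: field_simps)
  have "1 - \<mu>^2 * g^2 + (D + e) * (U - (U + \<mu> * g^2)) * ((U + \<mu> * g^2) - L - \<delta>)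
      - D * (U - (U + \<mu> * g^2)) * ((U + \<mu> * g^2) - L)
      = 1 - \<mu>^2 * g^2 - \<mu> * g^2 * (e * (U + \<mu> * g^2 - L) - \<delta> * (D + e))"
    by (simp add: algebra_simps)
  also have "\<dots> = 1 - \<mu>^2 * g^2 - \<mu> * g^2 * (2 * (g + \<mu> * g^2) / (k * g^2))"
    unfolding \<delta>De unfolding e using k g by (simp add: field_simps)
  also have "\<dots> = 1 - (1/c)^2 + 2 * (1/c) * (1 - 1/c) / k"
    unfolding \<mu> using k g c by (simp add: field_simps power2_eq_square)
  also have "\<dots> = M^2 / (M^2 - 1)"
    unfolding Mk by (rule inverse_square_identity[OF k c_def])
  finally show ?thesis .
qed

lemma ff_second_update:
  fixes A :: "real^'m^'n" and u d l :: "real^'m" and j :: 'm and M :: real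
  defines "g \<equiv> gam A u d l j"
  assumes std: "standing_assm A" and dpos: "\<forall>i. d $ i > 0" and f1: "ff A u d l = 1"
    and face: "column j A \<bullet> yy A u d l = u $ j" and M: "M > 1"
  shows "ff A u (d + (2 / (M - 1) * (1 / g^2)) *\<^sub>R axis j 1)
      (l + (2 * (2 * vv u l $ j - g) / ((M - 1) * d$j * g^2 + 2)) *\<^sub>R axis j 1) = M^2 / (M^2 - 1)"
proof -
  define e where "e = 2 / (M - 1) * (1 / g^2)"
  define \<delta> where "\<delta> = 2 * (2 * vv u l $ j - g) / ((M - 1) * d$j * g^2 + 2)"
  have h: "column j A \<bullet> (matrix_inv (BB A d) *v column j A) = g^2"
    using gam_square[OF std dpos, of u l j] by (simp add: f1 g_def)
  have "g > 0"
    using inner_column_BB_inverse_pos[OF std dpos, of j] by (simp add: g_def gam_def f1)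
  have e: "e \<ge> 0" using M by (simp add: e_def)
  define \<mu> where "\<mu> = (e * rr u l $ j + \<delta>/2 * (d$j + e) - e * u$j) / (1 + e * g^2)"
  have "1 + e * g^2 > 0" using e by (simp add: add_pos_nonneg)
  then have "\<mu> * (1 + e * g^2) = e * rr u l $ j + \<delta>/2 * (d$j + e) - e * u$j"
    unfolding \<mu>_def by simp
  then have \<mu>: "\<mu> + e * (u$j + \<mu> * g^2) = e * rr u l $ j + \<delta>/2 * (d$j + e)"
    by (simp add: algebra_simps)
  have "ff A u (d + e *\<^sub>R axis j 1) (l + \<delta> *\<^sub>R axis j 1) = 1 - \<mu>^2 * g^2
      + (d$j + e) * (u$j - (u$j + \<mu> * g^2)) * ((u$j + \<mu> * g^2) - l$j - \<delta>)
      - d$j * (u$j - (u$j + \<mu> * g^2)) * ((u$j + \<mu> * g^2) - l$j)"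
    using yy_ff_add_axis(2)[OF std dpos e, where j=j and u=u and l=l and \<delta>=\<delta> and \<mu>=\<mu>] \<mu>
    by (simp add: h face f1)
  also have "\<dots> = M^2 / (M^2 - 1)"
    using second_update_value[OF M \<open>g > 0\<close>, where D="d$j" and U="u$j" and L="l$j" and \<mu>=\<mu>] dpos \<mu>
    by (simp add: e_def \<delta>_def vv_def rr_def)
  finally show ?thesis by (simp add: e_def \<delta>_def)
qed

lemma standing_assm_card_ge_2:
  fixes A :: "real^'m^'n"
  assumes std: "standing_assm A"
  shows "CARD('m) \<ge> 2"
proof (rule ccontr)
  assume "\<not> CARD('m) \<ge> 2"
  then obtain j :: 'm where all: "\<And>i. i = j"
    using card_le_Suc0_iff_eq[of "UNIV :: 'm set"] by auto
  obtain lam where lam: "- column j A = A *v lam" "\<forall>i. lam $ i \<ge> 0"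
    using std unfolding standing_assm_def by blast
  have "lam = lam $ j *\<^sub>R axis j 1" by (simp add: vec_eq_iff axis_def) (metis all)
  then have "- column j A = lam $ j *\<^sub>R column j A"
    by (metis lam(1) matrix_vector_mult_basis matrix_vector_mult_scaleR)
  then have "column j A + lam $ j *\<^sub>R column j A = 0"
    by (metis right_minus)
  then have "(1 + lam $ j) *\<^sub>R column j A = 0"
    by (simp add: scaleR_add_left)
  moreover have "1 + lam $ j > 0" using lam(2) by (simp add: add_pos_nonneg)
  ultimately show False using standing_assm_column_neq_0[OF std] by simp
qed

lemma certified_lb_update_nth:
  assumes "certified_lb A u l Lam" and "\<forall>i. i \<noteq> j \<longrightarrow> l' $ i = l $ i"
    and "l' $ j \<le> - (column j Lam \<bullet> u)"
  shows "certified_lb A u l' Lam"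
  using assms unfolding certified_lb_def transpose_mult_vec by (metis vec_lambda_beta)

lemma lower_bound_update_nth_le:
  fixes l u :: "real^'m" and c g b :: real
  assumes c: "c \<ge> 0" and "l $ j \<le> b" and "u $ j - g \<le> b"
  shows "(l + (2 * (2 * vv u l $ j - g) / (c + 2)) *\<^sub>R axis j 1) $ j \<le> b"
proof -
  have "2 * (2 * vv u l $ j - g) = 2 * ((u $ j - g) - l $ j)" by (simp add: vv_def)
  then have nth: "(l + (2 * (2 * vv u l $ j - g) / (c + 2)) *\<^sub>R axis j 1) $ j
      = l $ j + 2 * ((u $ j - g) - l $ j) / (c + 2)"
    by simp
  have "2 * ((u $ j - g) - l $ j) \<le> (c + 2) * (b - l $ j)"
    using assms mult_right_mono[of 2 "c + 2" "b - l $ j"] by simp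
  then have "2 * ((u $ j - g) - l $ j) / (c + 2) \<le> b - l $ j"
    using c by (simp add: pos_divide_le_eq mult.commute)
  then show ?thesis unfolding nth by simp
qed

lemma sqrt_diff_le_sqrt_diff_square:
  fixes h s :: real
  assumes "0 \<le> s" and "s \<le> sqrt h"
  shows "sqrt h - s \<le> sqrt (h - s^2)"
proof (rule real_le_rsqrt)
  have "h \<ge> 0" using assms by (metis order_trans real_sqrt_ge_0_iff)
  then have "(sqrt h - s)^2 = h - 2 * s * sqrt h + s^2" by (simp add: power2_diff)
  also have "\<dots> \<le> h - s^2"
    using mult_left_mono[OF assms(2,1)] by (simp add: power2_eq_square)
  finally show "(sqrt h - s)^2 \<le> h - s^2" .
qed

theorem lemma6:
  fixes A :: "real^'m^'n" and u d l l1 l2 d1 d2 d3 :: "real^'m"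
    and Lam :: "real^'m^'m" and j :: 'm and L :: real
  assumes std: "standing_assm A"
    and dpos: "\<forall>i. d $ i > 0"
    and cert: "certified_lb A u l Lam"
    and f1: "ff A u d l = 1"
    and hj: "0 < column j A \<bullet> yy A u d l - u $ j"
            "column j A \<bullet> yy A u d l - u $ j \<le> gam A u d l j"
    and L_def: "L = column j A \<bullet> yy A u d l - gam A u d l j"
    and hL: "- (column j Lam \<bullet> u) \<ge> L"
    and l1_def: "l1 = l - (2 * (tt A u d l $ j - vv u l $ j) / (d $ j * (gam A u d l j)\<^sup>2)) *\<^sub>R axis j 1"
    and f_l1: "ff A u d l1 > 0"
    and d1_def: "d1 = (1 / ff A u d l1) *\<^sub>R d"
    and l2_def: "l2 = l1 + (2 * (2 * vv u l1 $ j - gam A u d1 l1 j) /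
                   ((real CARD('m) - 1) * d1 $ j * (gam A u d1 l1 j)\<^sup>2 + 2)) *\<^sub>R axis j 1"
    and d2_def: "d2 = d1 + (2 / (real CARD('m) - 1) * (1 / (gam A u d1 l1 j)\<^sup>2)) *\<^sub>R axis j 1"
    and d3_def: "d3 = (1 / ff A u d2 l2) *\<^sub>R d2"
  shows "(l2 $ j \<le> max (l $ j) L \<and> certified_lb A u l2 Lam)
       \<and> gam A u d1 l1 j > 0
       \<and> (ff A u d2 l2 = (real CARD('m))\<^sup>2 / ((real CARD('m))\<^sup>2 - 1)
          \<and> d3 = (((real CARD('m))\<^sup>2 - 1) / (real CARD('m))\<^sup>2) *\<^sub>R
                 (d1 + (2 / (real CARD('m) - 1) * (1 / (gam A u d1 l1 j)\<^sup>2)) *\<^sub>R axis j 1))"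
proof -
  define h where "h = column j A \<bullet> (matrix_inv (BB A d) *v column j A)"
  define s where "s = column j A \<bullet> yy A u d l - u $ j"
  note first = first_update_rescaled[OF std dpos f1 l1_def f_l1 d1_def, folded h_def s_def]
  let ?M = "real CARD('m)" and ?g = "gam A u d1 l1 j"
  have M: "?M > 1" using standing_assm_card_ge_2[OF std] by simp
  have d1pos: "\<forall>i. d1 $ i > 0" using dpos f_l1 by (simp add: d1_def)
  have gpos: "?g > 0" using first(3,4) by simp
  have ff2: "ff A u d2 l2 = ?M^2 / (?M^2 - 1)"
    unfolding d2_def l2_def by (rule ff_second_update[OF std d1pos first(1,2) M])
  have "l1 $ j \<le> l $ j"
    using hj(1) dpos[rule_format, of j]
    by (simp add: l1_def tt_minus_vv_nth divide_nonneg_nonneg)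
  moreover have "u $ j - ?g \<le> L"
    using sqrt_diff_le_sqrt_diff_square[of s h] hj first(3)
    by (simp add: L_def s_def h_def gam_def f1)
  moreover have "(?M - 1) * d1 $ j * ?g^2 \<ge> 0"
    using M d1pos[rule_format, of j] by simp
  ultimately have l2j: "l2 $ j \<le> max (l $ j) L"
    unfolding l2_def by (intro lower_bound_update_nth_le) auto
  moreover have "max (l $ j) L \<le> - (column j Lam \<bullet> u)"
    using cert hL by (simp add: certified_lb_def transpose_mult_vec)
  ultimately have "certified_lb A u l2 Lam"
    by (intro certified_lb_update_nth[OF cert]) (auto simp: l2_def l1_def axis_def)
  then show ?thesis using l2j gpos ff2 by (simp add: d3_def d2_def)
qed

end
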